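(* Let $I=\{1,\dots,\ell\}$, $J=\{\ell+1,\dots,p\}$, let $h_1,\dots,h_p\colon\mathbb R^n\times\mathbb R^m\to\overline{\mathbb R}$ and $\Gamma(x):=\{y\in\mathbb R^m\mid h_i(x,y)\le0\ (i\in I),\ h_i(x,y)=0\ (i\in J)\}$. Fix $\bar x\in\operatorname{dom}\Gamma$ and $\bar y\in\Gamma(\bar x)$. Assume that $h_1,\dots,h_p$ are continuous and continuously differentiable with respect to $y$ in a neighborhood of $\{\bar x\}\times\Gamma(\bar x)$, that $h_i(x,\cdot)\colon\mathbb R^m\to\mathbb R$ is continuous for every $x\in\operatorname{dom}\Gamma$ and every $i$, and assume (A1): for each $x\in\mathbb R^n$, $h_i(x,\cdot)$ is convex for $i\in I$ and affine for $i\in J$; and (A2): $\Gamma$ is locally bounded at $\bar x$. Then the following are equivalent: (a) $\Gamma$ is R-regular at $(\bar x,\bar y)$ with respect to $\operatorname{dom}\Gamma$; (b) there is a constant $M>0$ such that for all sequences $\{x^k\}\subset\operatorname{dom}\Gamma$, $\{\nu^k\}\subset\mathbb R^m$, $\{y^k\}\subset\mathbb R^m$ with $x^k\to\bar x$, $\nu^k\to\bar y$, $\nu^k\notin\Gamma(x^k)$ and $y^k\in\Pi(\nu^k,\Gamma(x^k))$ for all $k$, the set $\Lambda^M_{\nu^k}(x^k,y^k)$ is nonempty for all sufficiently large $k$.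
   Context: $\operatorname{dom}\Gamma:=\{x\mid\Gamma(x)\ne\emptyset\}$; $\|\cdot\|$ Euclidean norm; $\operatorname{dist}(\nu,A):=\inf_{z\in A}\|z-\nu\|$; $\Pi(\nu,A):=\operatorname{argmin}\{\|z-\nu\|\mid z\in A\}$. $\Gamma$ is locally bounded at $\bar x$ if there are a bounded set $B$ and a neighborhood $V$ of $\bar x$ with $\Gamma(x)\subset B$ for all $x\in V$. $\Gamma$ is R-regular at $(\bar x,\bar y)$ with respect to $\Omega$ if there exist $\kappa>0$ and a neighborhood $U$ of $(\bar x,\bar y)$ such that $\operatorname{dist}(y,\Gamma(x))\le\kappa\max\{0,\max_{i\in I}h_i(x,y),\max_{i\in J}|h_i(x,y)|\}$ for all $(x,y)\in U\cap(\Omega\times\mathbb R^m)$. For $x\in\operatorname{dom}\Gamma$, $\nu\notin\Gamma(x)$, $y\in\Pi(\nu,\Gamma(x))$, $M>0$: $\Lambda_\nu(x,y):=\{\lambda\in\mathbb R^p\mid \frac{y-\nu}{\|y-\nu\|}+\sum_{i=1}^p\lambda_i\nabla_yh_i(x,y)=0,\ \lambda_i\ge0,\ \lambda_ih_i(x,y)=0\ \forall i\in I\}$ and $\Lambda^M_\nu(x,y):=\{\lambda\in\Lambda_\nu(x,y)\mid\sum_{i=1}^p|\lambda_i|\le M\}$. *)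

theory Defs
  imports "HOL-Analysis.Analysis"
begin

definition Gam :: "(nat \<Rightarrow> (real^'n) \<times> (real^'m) \<Rightarrow> ereal) \<Rightarrow> nat \<Rightarrow> nat \<Rightarrow> real^'n \<Rightarrow> (real^'m) set" where
  "Gam h l p x = {y. (\<forall>i\<in>{1..l}. h i (x, y) \<le> 0) \<and> (\<forall>i\<in>{l+1..p}. h i (x, y) = 0)}"

definition domG :: "('a \<Rightarrow> 'b set) \<Rightarrow> 'a set" where
  "domG G = {x. G x \<noteq> {}}"

definition edist_set :: "'b::metric_space \<Rightarrow> 'b set \<Rightarrow> ereal" where
  "edist_set v A = (if A = {} then \<infinity> else ereal (infdist v A))"

definition proj :: "'b::real_normed_vector \<Rightarrow> 'b set \<Rightarrow> 'b set" where
  "proj v A = {z \<in> A. \<forall>w\<in>A. norm (z - v) \<le> norm (w - v)}"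

definition locally_bounded_at :: "('a::topological_space \<Rightarrow> 'b::metric_space set) \<Rightarrow> 'a \<Rightarrow> bool" where
  "locally_bounded_at G xb \<longleftrightarrow>
     (\<exists>B V. bounded B \<and> open V \<and> xb \<in> V \<and> (\<forall>x\<in>V. G x \<subseteq> B))"

definition resid :: "(nat \<Rightarrow> 'a \<times> 'b \<Rightarrow> ereal) \<Rightarrow> nat \<Rightarrow> nat \<Rightarrow> 'a \<Rightarrow> 'b \<Rightarrow> ereal" where
  "resid h l p x y = Max (insert 0 ((\<lambda>i. h i (x, y)) ` {1..l} \<union> (\<lambda>i. \<bar>h i (x, y)\<bar>) ` {l+1..p}))"

definition R_regular :: "(nat \<Rightarrow> (real^'n) \<times> (real^'m) \<Rightarrow> ereal) \<Rightarrow> nat \<Rightarrow> nat \<Rightarrow> real^'n \<Rightarrow> real^'m \<Rightarrow> (real^'n) set \<Rightarrow> bool" where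
  "R_regular h l p xb yb \<Omega> \<longleftrightarrow>
     (\<exists>\<kappa>>0. \<exists>U. open U \<and> (xb, yb) \<in> U \<and>
        (\<forall>x y. (x, y) \<in> U \<and> x \<in> \<Omega> \<longrightarrow>
           edist_set y (Gam h l p x) \<le> ereal \<kappa> * resid h l p x y))"

text \<open>Partial gradient of h with respect to y at (x,y) (of the real-valued function
  y' |-> h(x,y')); meaningful where this function is differentiable.\<close>
definition ygrad :: "('a \<times> 'b::real_inner \<Rightarrow> ereal) \<Rightarrow> 'a \<Rightarrow> 'b \<Rightarrow> 'b" where
  "ygrad f x y = (SOME g. ((\<lambda>y'. real_of_ereal (f (x, y'))) has_derivative (\<lambda>v. g \<bullet> v)) (at y))"

definition Lam :: "(nat \<Rightarrow> (real^'n) \<times> (real^'m) \<Rightarrow> ereal) \<Rightarrow> nat \<Rightarrow> nat \<Rightarrow> real^'m \<Rightarrow> real^'n \<Rightarrow> real^'m \<Rightarrow> (nat \<Rightarrow> real) set" where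
  "Lam h l p v x y = {lam. (\<forall>i. i \<notin> {1..p} \<longrightarrow> lam i = 0) \<and>
      (1 / norm (y - v)) *\<^sub>R (y - v) + (\<Sum>i=1..p. lam i *\<^sub>R ygrad (h i) x y) = 0 \<and>
      (\<forall>i\<in>{1..l}. lam i \<ge> 0 \<and> ereal (lam i) * h i (x, y) = 0)}"

definition LamM :: "(nat \<Rightarrow> (real^'n) \<times> (real^'m) \<Rightarrow> ereal) \<Rightarrow> nat \<Rightarrow> nat \<Rightarrow> real \<Rightarrow> real^'m \<Rightarrow> real^'n \<Rightarrow> real^'m \<Rightarrow> (nat \<Rightarrow> real) set" where
  "LamM h l p M v x y = {lam \<in> Lam h l p v x y. (\<Sum>i=1..p. \<bar>lam i\<bar>) \<le> M}"

definition ereal_convex :: "('b::real_vector \<Rightarrow> ereal) \<Rightarrow> bool" where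
  "ereal_convex f \<longleftrightarrow> convex {(y, r::real). f y \<le> ereal r}"

definition ereal_affine :: "('b::real_inner \<Rightarrow> ereal) \<Rightarrow> bool" where
  "ereal_affine f \<longleftrightarrow> (\<exists>a b. \<forall>y. f y = ereal (a \<bullet> y + b))"

end

theory Submission
  imports Defs
begin

text \<open>
  Write r(x, y) for the residual max {0, h_i(x, y) (i in I), |h_j(x, y)| (j in J)}. If y is a
  projection of v onto Gamma(x), the unit normal u = (v - y) / |v - y| satisfies
  u . (z - y) <= dist(z, Gamma(x)) for all z, because Gamma(x) is closed and convex.

  (a) implies (b): an error bound dist(z, Gamma(x)) <= kappa r(x, z) near y, combined with a
  first-order expansion of r along y + t d, gives u . d <= kappa max {0, g_i . d (i in I active),
  |g_j . d| (j in J)} for every direction d, where g_i is the partial gradient of h_i at (x, y).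
  By separation, u / kappa is then a combination of total weight at most 1 of 0, the active
  gradients and the vectors +g_j, -g_j: a multiplier with sum |lambda_i| <= kappa. Since
  |y^k - v^k| <= kappa r(x^k, v^k) tends to 0, the projections y^k tend to ybar, so this
  applies for all large k.

  (b) implies (a): by convexity every multiplier in Lambda^M gives
  |y - v| = sum lambda_i g_i . (v - y) <= M r(x, v). If R-regularity fails, there are
  (x^k, v^k) tending to (xbar, ybar) with dist(v^k, Gamma(x^k)) > k r(x^k, v^k). Local
  boundedness and convexity make Gamma upper semicontinuous at xbar, so the projections
  eventually lie where h is smooth, and k > M gives a contradiction.
\<close>

lemma has_derivative_directional_quotient:
  fixes f :: "'a::real_inner \<Rightarrow> real"
  assumes "(f has_derivative (\<lambda>v. g \<bullet> v)) (at y)"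
  shows "((\<lambda>t. (f (y + t *\<^sub>R d) - f y) / t) \<longlongrightarrow> g \<bullet> d) (at_right 0)"
proof -
  have "((\<lambda>t. y + t *\<^sub>R d) has_derivative (\<lambda>t. t *\<^sub>R d)) (at 0)"
    by (auto intro!: derivative_eq_intros)
  then have "(f \<circ> (\<lambda>t. y + t *\<^sub>R d) has_derivative (\<lambda>v. g \<bullet> v) \<circ> (\<lambda>t. t *\<^sub>R d)) (at 0)"
    using diff_chain_at assms by fastforce
  then have "((\<lambda>t. f (y + t *\<^sub>R d)) has_field_derivative (g \<bullet> d)) (at 0)"
    unfolding has_field_derivative_def by (simp add: o_def mult.commute[of _ "g \<bullet> d"])
  then have "((\<lambda>t. (f (y + t *\<^sub>R d) - f y) / t) \<longlongrightarrow> g \<bullet> d) (at 0)"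
    by (simp add: has_field_derivative_iff)
  then show ?thesis
    by (rule tendsto_mono[OF at_le, rotated]) simp
qed

lemma directional_first_order_bound:
  fixes f :: "'a::real_inner \<Rightarrow> real"
  assumes "(f has_derivative (\<lambda>v. g \<bullet> v)) (at y)" "0 < e"
  shows "\<forall>\<^sub>F t in at_right 0. \<bar>f (y + t *\<^sub>R d) - f y - t * (g \<bullet> d)\<bar> \<le> t * e"
  using tendstoD[OF has_derivative_directional_quotient[OF assms(1), of d] assms(2)]
    eventually_at_right_less[of "0::real"]
proof eventually_elim
  case (elim t)
  then have "\<bar>(f (y + t *\<^sub>R d) - f y - t * (g \<bullet> d)) / t\<bar> < e"
    by (simp add: dist_real_def diff_divide_distrib)
  with elim show ?case
    by (simp add: divide_simps mult.commute)
qed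

lemma convex_on_gradient_inequality:
  fixes f :: "'a::real_inner \<Rightarrow> real"
  assumes "convex_on UNIV f" "(f has_derivative (\<lambda>v. g \<bullet> v)) (at y)"
  shows "g \<bullet> (z - y) \<le> f z - f y"
proof -
  have "\<forall>\<^sub>F t in at_right 0. (f (y + t *\<^sub>R (z - y)) - f y) / t \<le> f z - f y"
    using eventually_at_right_real[OF zero_less_one]
  proof eventually_elim
    case (elim t)
    have "y + t *\<^sub>R (z - y) = (1 - t) *\<^sub>R y + t *\<^sub>R z"
      by (simp add: algebra_simps)
    with convex_onD[OF assms(1), of t y z] elim
    have "f (y + t *\<^sub>R (z - y)) - f y \<le> t * (f z - f y)"
      by (simp add: algebra_simps)
    with elim show ?case
      by (simp add: divide_simps mult.commute)
  qed
  then show ?thesis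
    using tendsto_le[OF _ tendsto_const has_derivative_directional_quotient[OF assms(2)]] by simp
qed

lemma affine_gradient_eq:
  fixes f :: "'a::real_inner \<Rightarrow> real"
  assumes "\<And>y. f y = a \<bullet> y + b" "(f has_derivative (\<lambda>v. g \<bullet> v)) (at y)"
  shows "g \<bullet> (z - y) = f z - f y"
proof -
  have "(f has_derivative (\<lambda>v. a \<bullet> v)) (at y)"
    unfolding assms(1)[abs_def] by (auto intro!: derivative_eq_intros)
  with assms(2) have "(\<lambda>v. g \<bullet> v) = (\<lambda>v. a \<bullet> v)"
    by (rule has_derivative_unique)
  then show ?thesis
    by (metis assms(1) add_diff_cancel_right inner_diff_right)
qed

lemma convex_on_real_of_ereal:
  assumes "ereal_convex f" "\<And>y. \<bar>f y\<bar> \<noteq> \<infinity>"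
  shows "convex_on UNIV (\<lambda>y. real_of_ereal (f y))"
proof (rule convex_onI)
  fix t :: real and a b
  assume t: "0 < t" "t < 1"
  let ?E = "{(y, r::real). f y \<le> ereal r}"
  have "(a, real_of_ereal (f a)) \<in> ?E" "(b, real_of_ereal (f b)) \<in> ?E"
    using assms(2) by (auto simp: ereal_real)
  from convexD[OF _ this, of "1 - t" t] assms(1) t
  have "f ((1 - t) *\<^sub>R a + t *\<^sub>R b) \<le> ereal ((1 - t) * real_of_ereal (f a) + t * real_of_ereal (f b))"
    by (simp add: ereal_convex_def scaleR_prod_def)
  then show "real_of_ereal (f ((1 - t) *\<^sub>R a + t *\<^sub>R b))
      \<le> (1 - t) * real_of_ereal (f a) + t * real_of_ereal (f b)"
    using assms(2)[of "(1 - t) *\<^sub>R a + t *\<^sub>R b"] by (metis ereal_less_eq(3) ereal_real)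
qed simp

lemma norm_eq_infdist_if_proj:
  assumes "y \<in> proj v A"
  shows "norm (y - v) = infdist v A"
proof (rule antisym)
  have "y \<in> A" "\<And>w. w \<in> A \<Longrightarrow> dist v y \<le> dist v w"
    using assms by (auto simp: proj_def dist_norm norm_minus_commute)
  then have "A \<noteq> {}" "dist v y \<le> (INF w\<in>A. dist v w)"
    by (auto intro: cINF_greatest)
  then show "norm (y - v) \<le> infdist v A"
    by (simp add: infdist_notempty dist_norm norm_minus_commute)
  show "infdist v A \<le> norm (y - v)"
    using assms infdist_le[of y A v] by (simp add: proj_def dist_norm norm_minus_commute)
qed

lemma proj_normal_bound:
  fixes A :: "'a::euclidean_space set"
  assumes "convex A" "closed A" "y \<in> proj v A"
  shows "sgn (v - y) \<bullet> (z - y) \<le> infdist z A"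
proof -
  have y: "y \<in> A" "\<forall>w\<in>A. dist v y \<le> dist v w"
    using assms(3) by (auto simp: proj_def dist_norm norm_minus_commute)
  then obtain w where w: "w \<in> A" "infdist z A = dist z w"
    using infdist_attains_inf[OF assms(2)] by blast
  have "(v - y) \<bullet> (w - y) \<le> 0"
    using any_closest_point_dot[OF assms(1,2) y(1) w(1) y(2)] .
  then have "sgn (v - y) \<bullet> (w - y) \<le> 0"
    by (simp add: sgn_div_norm mult_nonneg_nonpos)
  moreover have "sgn (v - y) \<bullet> (z - w) \<le> norm (z - w)"
    using norm_cauchy_schwarz[of "sgn (v - y)" "z - w"] by (cases "v = y") (auto simp: norm_sgn)
  ultimately show ?thesis
    using w(2) by (simp add: dist_norm inner_diff_right)
qed

lemma normalized_diff_eq_neg_sgn: "(1 / norm (y - v)) *\<^sub>R (y - v) = - sgn (v - y)"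
  by (simp add: sgn_div_norm norm_minus_commute divide_inverse_commute flip: scaleR_minus_right)

lemma proj_nonempty:
  fixes A :: "'a::euclidean_space set"
  assumes "closed A" "A \<noteq> {}"
  shows "proj v A \<noteq> {}"
proof -
  obtain y where "y \<in> A" "\<And>w. w \<in> A \<Longrightarrow> dist v y \<le> dist v w"
    using distance_attains_inf[OF assms] by blast
  then have "y \<in> proj v A"
    by (auto simp: proj_def dist_norm norm_minus_commute)
  then show ?thesis
    by blast
qed

lemma mem_convex_hull_if_support_le:
  fixes z :: "'a::euclidean_space"
  assumes "finite S" "S \<noteq> {}" "\<And>d. z \<bullet> d \<le> Max ((\<lambda>s. s \<bullet> d) ` S)"
  shows "z \<in> convex hull S"
proof (rule ccontr)
  assume "z \<notin> convex hull S"
  moreover have "closed (convex hull S)"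
    using assms(1) by (simp add: compact_imp_closed finite_imp_compact_convex_hull)
  ultimately obtain a b where ab: "a \<bullet> z < b" "\<And>x. x \<in> convex hull S \<Longrightarrow> b < a \<bullet> x"
    using separating_hyperplane_closed_point[OF convex_convex_hull] by blast
  have "Max ((\<lambda>s. s \<bullet> (-a)) ` S) < - b"
    using assms(1,2) ab(2) hull_subset[of S convex] by (auto simp: inner_commute)
  with assms(3)[of "-a"] ab(1) show False
    by (simp add: inner_commute)
qed

lemma convex_hull_insert_zero_subset:
  fixes v :: "'i \<Rightarrow> 'a::real_vector"
  assumes "finite G"
  shows "convex hull (insert 0 (v ` G)) \<subseteq>
    {\<Sum>g\<in>G. \<mu> g *\<^sub>R v g | \<mu>. (\<forall>g. 0 \<le> \<mu> g) \<and> (\<forall>g. g \<notin> G \<longrightarrow> \<mu> g = 0) \<and> sum \<mu> G \<le> 1}"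
    (is "_ \<subseteq> ?C")
proof (rule hull_minimal)
  have "v g \<in> ?C" if "g \<in> G" for g
  proof -
    have "(\<Sum>g'\<in>G. (if g' = g then 1 else 0) *\<^sub>R v g') = (\<Sum>g'\<in>G. if g' = g then v g' else 0)"
      by (rule sum.cong) auto
    then have "v g = (\<Sum>g'\<in>G. (if g' = g then 1 else 0) *\<^sub>R v g')"
      using assms that by simp
    with assms that show ?thesis
      by (intro CollectI exI[of _ "\<lambda>g'. if g' = g then 1 else 0"]) auto
  qed
  moreover have "0 \<in> ?C"
    by (intro CollectI exI[of _ "\<lambda>_. 0"]) simp
  ultimately show "insert 0 (v ` G) \<subseteq> ?C"
    by blast
  show "convex ?C"
  proof (rule convexI)
    fix x y and s t :: real
    assume "x \<in> ?C" "y \<in> ?C" and st: "0 \<le> s" "0 \<le> t" "s + t = 1"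
    then obtain \<mu> \<nu> where
      \<mu>: "\<forall>g. 0 \<le> \<mu> g" "\<forall>g. g \<notin> G \<longrightarrow> \<mu> g = 0" "sum \<mu> G \<le> 1" "x = (\<Sum>g\<in>G. \<mu> g *\<^sub>R v g)" and
      \<nu>: "\<forall>g. 0 \<le> \<nu> g" "\<forall>g. g \<notin> G \<longrightarrow> \<nu> g = 0" "sum \<nu> G \<le> 1" "y = (\<Sum>g\<in>G. \<nu> g *\<^sub>R v g)"
      by blast
    have "(\<Sum>g\<in>G. s * \<mu> g + t * \<nu> g) = s * sum \<mu> G + t * sum \<nu> G"
      by (simp add: sum.distrib sum_distrib_left)
    also have "\<dots> \<le> s + t"
      using st \<mu>(3) \<nu>(3) by (intro add_mono mult_left_le) auto
    finally have "(\<Sum>g\<in>G. s * \<mu> g + t * \<nu> g) \<le> 1"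
      using st by simp
    moreover have "s *\<^sub>R x + t *\<^sub>R y = (\<Sum>g\<in>G. (s * \<mu> g + t * \<nu> g) *\<^sub>R v g)"
      by (simp add: \<mu>(4) \<nu>(4) scaleR_sum_right sum.distrib scaleR_add_left)
    ultimately show "s *\<^sub>R x + t *\<^sub>R y \<in> ?C"
      using \<mu> \<nu> st by (intro CollectI exI[of _ "\<lambda>g. s * \<mu> g + t * \<nu> g"]) auto
  qed
qed

lemma sum_Times_UNIV_bool:
  "(\<Sum>\<gamma>\<in>A \<times> UNIV. F \<gamma>) = (\<Sum>i\<in>A. F (i, True) + F (i, False))"
  by (simp add: sum.cartesian_product' UNIV_bool add.commute)

lemma sequence_tendsto_choice:
  fixes a :: "'a::metric_space"
  assumes "\<And>k::nat. \<exists>z. dist z a < inverse (real (Suc k)) \<and> P k z"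
  shows "\<exists>Z. Z \<longlonglongrightarrow> a \<and> (\<forall>k. P k (Z k))"
proof -
  obtain Z where Z: "\<And>k. dist (Z k) a < inverse (real (Suc k)) \<and> P k (Z k)"
    using assms by metis
  have "(\<lambda>k. dist (Z k) a) \<longlonglongrightarrow> 0"
    by (intro tendsto_sandwich[OF _ _ tendsto_const LIMSEQ_inverse_real_of_nat] always_eventually allI)
      (use Z in \<open>auto intro: less_imp_le\<close>)
  then have "Z \<longlonglongrightarrow> a"
    by (subst tendsto_dist_iff)
  with Z show ?thesis
    by blast
qed

lemma compact_thickening_subset_open:
  fixes K :: "'b::heine_borel set" and a :: "'a::heine_borel"
  assumes "compact K" "K \<noteq> {}" "open U" "{a} \<times> K \<subseteq> U"
  shows "\<exists>e>0. \<forall>x y. dist x a < e \<longrightarrow> infdist y K < e \<longrightarrow> (x, y) \<in> U"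
proof -
  have "compact ({a} \<times> K)"
    using assms(1) by (intro compact_Times) simp_all
  moreover have "closed (- U)"
    using assms(3) by blast
  moreover have "({a} \<times> K) \<inter> - U = {}"
    using assms(4) by blast
  ultimately obtain \<delta> where \<delta>: "0 < \<delta>" "\<And>z w. z \<in> {a} \<times> K \<Longrightarrow> w \<in> - U \<Longrightarrow> \<delta> \<le> dist z w"
    using separate_compact_closed[of "{a} \<times> K" "- U"] by blast
  have "(x, y) \<in> U" if "dist x a < \<delta> / 2" "infdist y K < \<delta> / 2" for x y
  proof (rule ccontr)
    assume "(x, y) \<notin> U"
    obtain k where k: "k \<in> K" "infdist y K = dist y k"
      using infdist_attains_inf[OF compact_imp_closed[OF assms(1)] assms(2)] by blast
    have "dist (a, k) (x, y) \<le> dist a x + dist k y"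
      unfolding dist_Pair_Pair by (rule sqrt_sum_squares_le_sum) simp_all
    also have "\<dots> < \<delta>"
      using that k by (simp add: dist_commute)
    finally show False
      using \<delta>(2)[of "(a, k)" "(x, y)"] k \<open>(x, y) \<notin> U\<close> by simp
  qed
  with \<delta>(1) show ?thesis
    by (intro exI[of _ "\<delta> / 2"]) auto
qed

lemma closed_segment_infdist_IVT:
  fixes a b :: "'a::real_normed_vector"
  assumes "a \<in> K" "0 \<le> r" "r \<le> infdist b K"
  shows "\<exists>w\<in>closed_segment a b. infdist w K = r"
proof -
  have "continuous_on {0..1} (\<lambda>t::real. infdist (a + t *\<^sub>R (b - a)) K)"
    by (intro continuous_intros)
  then obtain t where "0 \<le> t" "t \<le> 1" "infdist (a + t *\<^sub>R (b - a)) K = r"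
    using IVT'[of "\<lambda>t. infdist (a + t *\<^sub>R (b - a)) K" 0 r 1] assms by auto
  moreover have "a + t *\<^sub>R (b - a) = (1 - t) *\<^sub>R a + t *\<^sub>R b"
    by (simp add: algebra_simps)
  ultimately show ?thesis
    by (auto simp: closed_segment_def)
qed

definition feasible_set :: "(nat \<Rightarrow> 'a \<Rightarrow> real) \<Rightarrow> nat \<Rightarrow> nat \<Rightarrow> 'a set" where
  "feasible_set f l p = {y. (\<forall>i\<in>{1..l}. f i y \<le> 0) \<and> (\<forall>i\<in>{l+1..p}. f i y = 0)}"

definition residual :: "(nat \<Rightarrow> 'a \<Rightarrow> real) \<Rightarrow> nat \<Rightarrow> nat \<Rightarrow> 'a \<Rightarrow> real" where
  "residual f l p y = Max (insert 0 ((\<lambda>i. f i y) ` {1..l} \<union> (\<lambda>i. \<bar>f i y\<bar>) ` {l+1..p}))"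

definition projection_multipliers ::
    "(nat \<Rightarrow> 'a \<Rightarrow> real) \<Rightarrow> (nat \<Rightarrow> 'a::real_inner) \<Rightarrow> nat \<Rightarrow> nat \<Rightarrow> real \<Rightarrow> 'a \<Rightarrow> 'a \<Rightarrow> (nat \<Rightarrow> real) set" where
  "projection_multipliers f g l p M v y = {lam. (\<forall>i. i \<notin> {1..p} \<longrightarrow> lam i = 0) \<and>
      (1 / norm (y - v)) *\<^sub>R (y - v) + (\<Sum>i=1..p. lam i *\<^sub>R g i) = 0 \<and>
      (\<forall>i\<in>{1..l}. 0 \<le> lam i \<and> lam i * f i y = 0) \<and> (\<Sum>i=1..p. \<bar>lam i\<bar>) \<le> M}"

lemma residual_nonneg: "0 \<le> residual f l p y"
  unfolding residual_def by (intro Max_ge) auto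

lemma le_residual:
  shows "i \<in> {1..l} \<Longrightarrow> f i y \<le> residual f l p y"
    and "i \<in> {l+1..p} \<Longrightarrow> \<bar>f i y\<bar> \<le> residual f l p y"
  unfolding residual_def by (intro Max_ge; simp)+

lemma residual_le:
  assumes "0 \<le> c" "\<And>i. i \<in> {1..l} \<Longrightarrow> f i y \<le> c" "\<And>i. i \<in> {l+1..p} \<Longrightarrow> \<bar>f i y\<bar> \<le> c"
  shows "residual f l p y \<le> c"
  unfolding residual_def using assms by (auto intro!: Max.boundedI)

lemma feasible_iff_residual_eq_0: "y \<in> feasible_set f l p \<longleftrightarrow> residual f l p y = 0"
proof
  assume "y \<in> feasible_set f l p"
  then show "residual f l p y = 0"
    by (intro antisym residual_le residual_nonneg) (auto simp: feasible_set_def)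
next
  assume "residual f l p y = 0"
  then show "y \<in> feasible_set f l p"
    using le_residual[where f=f and l=l and p=p and y=y] by (force simp: feasible_set_def)
qed

lemma residual_le_sum:
  "residual f l p y \<le> (\<Sum>i=1..l. max 0 (f i y)) + (\<Sum>i=l+1..p. \<bar>f i y\<bar>)"
proof (rule residual_le)
  fix i assume "i \<in> {1..l}"
  then have "f i y \<le> (\<Sum>i=1..l. max 0 (f i y))"
    using member_le_sum[of i "{1..l}" "\<lambda>i. max 0 (f i y)"] by fastforce
  then show "f i y \<le> (\<Sum>i=1..l. max 0 (f i y)) + (\<Sum>i=l+1..p. \<bar>f i y\<bar>)"
    by (simp add: add_increasing2 sum_nonneg)
next
  fix i assume "i \<in> {l+1..p}"
  then have "\<bar>f i y\<bar> \<le> (\<Sum>i=l+1..p. \<bar>f i y\<bar>)"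
    by (intro member_le_sum) auto
  then show "\<bar>f i y\<bar> \<le> (\<Sum>i=1..l. max 0 (f i y)) + (\<Sum>i=l+1..p. \<bar>f i y\<bar>)"
    by (simp add: add_increasing sum_nonneg)
qed (simp add: sum_nonneg)

lemma residual_tendsto_0:
  assumes "l \<le> p" "\<And>i. i \<in> {1..p} \<Longrightarrow> ((\<lambda>k. F k i (Y k)) \<longlongrightarrow> f i y) G"
    and "y \<in> feasible_set f l p"
  shows "((\<lambda>k. residual (F k) l p (Y k)) \<longlongrightarrow> 0) G"
proof (rule tendsto_sandwich[OF _ _ tendsto_const])
  have "((\<lambda>k. (\<Sum>i=1..l. max 0 (F k i (Y k))) + (\<Sum>i=l+1..p. \<bar>F k i (Y k)\<bar>))
      \<longlongrightarrow> (\<Sum>i=1..l. max 0 (f i y)) + (\<Sum>i=l+1..p. \<bar>f i y\<bar>)) G"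
    using assms(1,2) by (intro tendsto_intros) auto
  moreover have "(\<Sum>i=1..l. max 0 (f i y)) + (\<Sum>i=l+1..p. \<bar>f i y\<bar>) = 0"
    using assms(3) by (simp add: feasible_set_def)
  ultimately show "((\<lambda>k. (\<Sum>i=1..l. max 0 (F k i (Y k))) + (\<Sum>i=l+1..p. \<bar>F k i (Y k)\<bar>)) \<longlongrightarrow> 0) G"
    by simp
qed (intro always_eventually allI residual_nonneg residual_le_sum)+

lemma feasible_if_residual_tendsto_0:
  assumes "l \<le> p" "\<And>i. i \<in> {1..p} \<Longrightarrow> ((\<lambda>k. F k i (Y k)) \<longlongrightarrow> f i y) G"
    and "G \<noteq> bot" "((\<lambda>k. residual (F k) l p (Y k)) \<longlongrightarrow> 0) G"
  shows "y \<in> feasible_set f l p"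
  unfolding feasible_set_def
proof (intro CollectI conjI ballI)
  fix i assume i: "i \<in> {1..l}"
  with assms(1) show "f i y \<le> 0"
    by (intro tendsto_le[OF assms(3,4) assms(2)]) (auto intro!: always_eventually le_residual)
next
  fix i assume i: "i \<in> {l+1..p}"
  with assms(1) have "\<bar>f i y\<bar> \<le> 0"
    by (intro tendsto_le[OF assms(3,4) tendsto_rabs[OF assms(2)]]) (auto intro!: always_eventually le_residual)
  then show "f i y = 0"
    by simp
qed

definition active_constraints :: "(nat \<Rightarrow> 'a \<Rightarrow> real) \<Rightarrow> nat \<Rightarrow> nat \<Rightarrow> 'a \<Rightarrow> (nat \<times> bool) set" where
  "active_constraints f l p y = {(i, True) | i. i \<in> {1..l} \<and> f i y = 0} \<union> {l+1..p} \<times> UNIV"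

definition signed_gradient :: "(nat \<Rightarrow> 'a::ab_group_add) \<Rightarrow> nat \<times> bool \<Rightarrow> 'a" where
  "signed_gradient g \<gamma> = (if snd \<gamma> then g (fst \<gamma>) else - g (fst \<gamma>))"

text \<open>Since \<open>max (a \<bullet> d) (- a \<bullet> d) = \<bar>a \<bullet> d\<bar>\<close>, this is the residual in direction \<open>d\<close> of the
  linearization at \<open>y\<close> of the active constraints.\<close>
definition linearized_residual ::
    "(nat \<Rightarrow> 'a \<Rightarrow> real) \<Rightarrow> (nat \<Rightarrow> 'a::real_inner) \<Rightarrow> nat \<Rightarrow> nat \<Rightarrow> 'a \<Rightarrow> 'a \<Rightarrow> real" where
  "linearized_residual f g l p y d =
     Max (insert 0 ((\<lambda>\<gamma>. signed_gradient g \<gamma> \<bullet> d) ` active_constraints f l p y))"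

lemma active_constraints_subset: "l \<le> p \<Longrightarrow> active_constraints f l p y \<subseteq> {1..p} \<times> UNIV"
  by (auto simp: active_constraints_def)

lemma finite_active_constraints: "l \<le> p \<Longrightarrow> finite (active_constraints f l p y)"
  by (rule finite_subset[OF active_constraints_subset]) (auto intro: finite_cartesian_product)

lemma linearized_residual_ge:
  assumes "l \<le> p"
  shows "0 \<le> linearized_residual f g l p y d"
    and "\<gamma> \<in> active_constraints f l p y \<Longrightarrow> signed_gradient g \<gamma> \<bullet> d \<le> linearized_residual f g l p y d"
  unfolding linearized_residual_def using finite_active_constraints[OF assms, of f y]
  by (intro Max_ge; simp)+

lemma residual_le_linearized_residual:
  assumes "l \<le> p" and y: "y \<in> feasible_set f l p" and "0 < t" "0 \<le> e"
    and linear: "\<And>i. i \<in> {1..p} \<Longrightarrow> \<bar>f i (y + t *\<^sub>R d) - f i y - t * (g i \<bullet> d)\<bar> \<le> t * e"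
    and inactive: "\<And>i. i \<in> {1..l} \<Longrightarrow> f i y \<noteq> 0 \<Longrightarrow> f i (y + t *\<^sub>R d) < 0"
  shows "residual f l p (y + t *\<^sub>R d) \<le> t * (linearized_residual f g l p y d + e)"
proof (rule residual_le)
  let ?\<phi> = "linearized_residual f g l p y d"
  have \<phi>: "0 \<le> ?\<phi>" "\<And>\<gamma>. \<gamma> \<in> active_constraints f l p y \<Longrightarrow> signed_gradient g \<gamma> \<bullet> d \<le> ?\<phi>"
    using linearized_residual_ge[OF \<open>l \<le> p\<close>] by blast+
  then show nonneg: "0 \<le> t * (?\<phi> + e)"
    using \<open>0 < t\<close> \<open>0 \<le> e\<close> by simp
  fix i assume i: "i \<in> {1..l}"
  show "f i (y + t *\<^sub>R d) \<le> t * (?\<phi> + e)"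
  proof (cases "f i y = 0")
    case True
    then have "g i \<bullet> d \<le> ?\<phi>"
      using \<phi>(2)[of "(i, True)"] i by (simp add: active_constraints_def signed_gradient_def)
    then have "t * (g i \<bullet> d) \<le> t * ?\<phi>"
      using \<open>0 < t\<close> by (simp add: mult_left_mono)
    moreover have "\<bar>f i (y + t *\<^sub>R d) - t * (g i \<bullet> d)\<bar> \<le> t * e"
      using linear[of i] i \<open>l \<le> p\<close> True by simp
    ultimately show ?thesis
      by (simp add: abs_le_iff distrib_left)
  next
    case False
    with inactive[OF i] nonneg show ?thesis
      by linarith
  qed
next
  let ?\<phi> = "linearized_residual f g l p y d"
  fix i assume i: "i \<in> {l+1..p}"
  then have "(i, True) \<in> active_constraints f l p y" "(i, False) \<in> active_constraints f l p y"
    by (auto simp: active_constraints_def)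
  then have "g i \<bullet> d \<le> ?\<phi>" "- (g i \<bullet> d) \<le> ?\<phi>"
    using linearized_residual_ge(2)[OF \<open>l \<le> p\<close>] by (fastforce simp: signed_gradient_def)+
  then have "t * (g i \<bullet> d) \<le> t * ?\<phi>" "t * - (g i \<bullet> d) \<le> t * ?\<phi>"
    using \<open>0 < t\<close> by (intro mult_left_mono; simp)+
  moreover have "\<bar>f i (y + t *\<^sub>R d) - t * (g i \<bullet> d)\<bar> \<le> t * e"
    using linear[of i] i y by (simp add: feasible_set_def)
  ultimately show "\<bar>f i (y + t *\<^sub>R d)\<bar> \<le> t * (?\<phi> + e)"
    by (simp add: abs_le_iff distrib_left)
qed

locale convex_constraints =
  fixes f :: "nat \<Rightarrow> 'a::euclidean_space \<Rightarrow> real" and l p :: nat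
  assumes l_le_p: "l \<le> p"
    and convex_ineq: "i \<in> {1..l} \<Longrightarrow> convex_on UNIV (f i)"
    and affine_eq: "i \<in> {l+1..p} \<Longrightarrow> \<exists>a b. \<forall>y. f i y = a \<bullet> y + b"
begin

lemma continuous_constraint:
  assumes "i \<in> {1..p}"
  shows "continuous_on UNIV (f i)"
proof (cases "i \<le> l")
  case True
  with assms show ?thesis
    by (intro convex_on_continuous convex_ineq) auto
next
  case False
  with assms obtain a b where "\<And>y. f i y = a \<bullet> y + b"
    using affine_eq by fastforce
  then have "f i = (\<lambda>y. a \<bullet> y + b)"
    by blast
  then show ?thesis
    by (simp add: continuous_on_add continuous_on_inner)
qed

lemma closed_feasible_set: "closed (feasible_set f l p)"
proof -
  have eq: "feasible_set f l p = (\<Inter>i\<in>{1..l}. {y. f i y \<le> 0}) \<inter> (\<Inter>i\<in>{l+1..p}. {y. f i y = 0})"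
    by (auto simp: feasible_set_def)
  have "i \<in> {1..l} \<union> {l+1..p} \<Longrightarrow> continuous_on UNIV (f i)" for i
    using l_le_p by (intro continuous_constraint) auto
  then show ?thesis
    unfolding eq
    by (intro closed_Int closed_INT ballI closed_Collect_le closed_Collect_eq continuous_on_const) auto
qed

lemma affine_constraint_combination:
  assumes "i \<in> {l+1..p}"
  shows "f i ((1 - t) *\<^sub>R a + t *\<^sub>R b) = (1 - t) * f i a + t * f i b"
  using affine_eq[OF assms] by (auto simp: algebra_simps)

lemma residual_closed_segment_le:
  assumes "y \<in> feasible_set f l p" "w \<in> closed_segment a y"
  shows "residual f l p w \<le> residual f l p a"
proof -
  obtain t where t: "0 \<le> t" "t \<le> 1" "w = (1 - t) *\<^sub>R a + t *\<^sub>R y"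
    using assms(2) by (auto simp: closed_segment_def)
  show ?thesis
  proof (rule residual_le[OF residual_nonneg])
    fix i assume i: "i \<in> {1..l}"
    have "f i w \<le> (1 - t) * f i a + t * f i y"
      using convex_onD[OF convex_ineq[OF i]] t by simp
    also have "\<dots> \<le> (1 - t) * residual f l p a"
    proof -
      have "t * f i y \<le> 0"
        using assms(1) i t(1) by (simp add: feasible_set_def mult_nonneg_nonpos)
      moreover have "(1 - t) * f i a \<le> (1 - t) * residual f l p a"
        using t(2) le_residual(1)[OF i] by (intro mult_left_mono) auto
      ultimately show ?thesis
        by linarith
    qed
    also have "\<dots> \<le> residual f l p a"
      using t residual_nonneg[of f l p a] by (simp add: mult_left_le_one_le)
    finally show "f i w \<le> residual f l p a" .
  next
    fix i assume i: "i \<in> {l+1..p}"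
    then have "\<bar>f i w\<bar> = (1 - t) * \<bar>f i a\<bar>"
      using assms(1) t by (simp add: affine_constraint_combination feasible_set_def abs_mult)
    also have "\<dots> \<le> \<bar>f i a\<bar>"
      using t by (simp add: mult_left_le_one_le)
    finally show "\<bar>f i w\<bar> \<le> residual f l p a"
      using le_residual(2)[OF i] by (rule order_trans)
  qed
qed

lemma convex_feasible_set: "convex (feasible_set f l p)"
  unfolding convex_contains_segment
proof (intro ballI subsetI)
  fix a y w assume "a \<in> feasible_set f l p" "y \<in> feasible_set f l p" "w \<in> closed_segment a y"
  then show "w \<in> feasible_set f l p"
    using residual_closed_segment_le residual_nonneg
    by (metis feasible_iff_residual_eq_0 order_antisym)
qed

lemma gradient_le:
  assumes "i \<in> {1..l}" "(f i has_derivative (\<lambda>v. g \<bullet> v)) (at y)"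
  shows "g \<bullet> (z - y) \<le> f i z - f i y"
  using convex_on_gradient_inequality[OF convex_ineq[OF assms(1)] assms(2)] .

lemma gradient_eq:
  assumes "i \<in> {l+1..p}" "(f i has_derivative (\<lambda>v. g \<bullet> v)) (at y)"
  shows "g \<bullet> (z - y) = f i z - f i y"
  using affine_eq[OF assms(1)] affine_gradient_eq[OF _ assms(2)] by metis

lemma norm_le_multiplier_residual:
  assumes y: "y \<in> feasible_set f l p"
    and deriv: "\<And>i. i \<in> {1..p} \<Longrightarrow> (f i has_derivative (\<lambda>v. g i \<bullet> v)) (at y)"
    and lam: "lam \<in> projection_multipliers f g l p M v y"
  shows "norm (y - v) \<le> M * residual f l p v"
proof -
  have eq: "(\<Sum>i=1..p. lam i *\<^sub>R g i) = sgn (v - y)"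
    and sign: "\<And>i. i \<in> {1..l} \<Longrightarrow> 0 \<le> lam i \<and> lam i * f i y = 0"
    and sum_le: "(\<Sum>i=1..p. \<bar>lam i\<bar>) \<le> M"
    using lam by (auto simp: projection_multipliers_def normalized_diff_eq_neg_sgn add_eq_0_iff)
  have term_le: "lam i * (g i \<bullet> (v - y)) \<le> \<bar>lam i\<bar> * residual f l p v" if i: "i \<in> {1..p}" for i
  proof (cases "i \<le> l")
    case True
    with i have iI: "i \<in> {1..l}" by simp
    have "lam i * (g i \<bullet> (v - y)) \<le> lam i * (f i v - f i y)"
      using gradient_le[OF iI deriv[OF i]] sign[OF iI] by (intro mult_left_mono) auto
    also have "\<dots> = lam i * f i v"
      using sign[OF iI] by (simp add: right_diff_distrib)
    also have "\<dots> \<le> \<bar>lam i\<bar> * residual f l p v"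
      using sign[OF iI] le_residual(1)[OF iI, where f=f and y=v and p=p] by (simp add: mult_left_mono)
    finally show ?thesis .
  next
    case False
    with i have iJ: "i \<in> {l+1..p}" by simp
    have "lam i * (g i \<bullet> (v - y)) = lam i * f i v"
      using gradient_eq[OF iJ deriv[OF i]] y iJ by (simp add: feasible_set_def)
    also have "\<dots> \<le> \<bar>lam i\<bar> * \<bar>f i v\<bar>"
      by (simp flip: abs_mult)
    also have "\<dots> \<le> \<bar>lam i\<bar> * residual f l p v"
      using le_residual(2)[OF iJ, where f=f and y=v] by (simp add: mult_left_mono)
    finally show ?thesis .
  qed
  have "norm (y - v) = sgn (v - y) \<bullet> (v - y)"
    by (cases "v = y") (simp_all add: sgn_div_norm dot_square_norm power2_eq_square norm_minus_commute)
  also have "\<dots> = (\<Sum>i=1..p. lam i * (g i \<bullet> (v - y)))"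
    by (simp add: eq[symmetric] inner_sum_left)
  also have "\<dots> \<le> (\<Sum>i=1..p. \<bar>lam i\<bar> * residual f l p v)"
    by (rule sum_mono) (rule term_le)
  also have "\<dots> = (\<Sum>i=1..p. \<bar>lam i\<bar>) * residual f l p v"
    by (simp add: sum_distrib_right)
  also have "\<dots> \<le> M * residual f l p v"
    using sum_le by (rule mult_right_mono) (rule residual_nonneg)
  finally show ?thesis .
qed

lemma residual_first_order_bound:
  assumes y: "y \<in> feasible_set f l p"
    and deriv: "\<And>i. i \<in> {1..p} \<Longrightarrow> (f i has_derivative (\<lambda>v. g i \<bullet> v)) (at y)"
    and "0 < e"
  shows "\<forall>\<^sub>F t in at_right 0. residual f l p (y + t *\<^sub>R d) \<le> t * (linearized_residual f g l p y d + e)"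
proof -
  have linear: "\<forall>\<^sub>F t in at_right 0. \<forall>i\<in>{1..p}. \<bar>f i (y + t *\<^sub>R d) - f i y - t * (g i \<bullet> d)\<bar> \<le> t * e"
    using deriv by (intro eventually_ball_finite ballI directional_first_order_bound[OF _ \<open>0 < e\<close>]) auto
  have inactive: "\<forall>\<^sub>F t in at_right 0. \<forall>i\<in>{i\<in>{1..l}. f i y \<noteq> 0}. f i (y + t *\<^sub>R d) < 0"
  proof (intro eventually_ball_finite ballI)
    fix i assume i: "i \<in> {i\<in>{1..l}. f i y \<noteq> 0}"
    have "((\<lambda>t. y + t *\<^sub>R d) \<longlongrightarrow> y + 0 *\<^sub>R d) (at_right 0)"
      by (intro tendsto_intros)
    moreover have "isCont (f i) y"
      using continuous_constraint[of i] i l_le_p by (simp add: continuous_on_eq_continuous_at)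
    ultimately have "((\<lambda>t. f i (y + t *\<^sub>R d)) \<longlongrightarrow> f i y) (at_right 0)"
      using isCont_tendsto_compose by fastforce
    moreover have "f i y < 0"
      using i y by (auto simp: feasible_set_def less_le)
    ultimately show "\<forall>\<^sub>F t in at_right 0. f i (y + t *\<^sub>R d) < 0"
      by (rule order_tendstoD(2))
  qed simp
  show ?thesis
    using linear inactive eventually_at_right_less[of "0::real"]
  proof eventually_elim
    case (elim t)
    with \<open>0 < e\<close> show ?case
      by (intro residual_le_linearized_residual[OF l_le_p y]) auto
  qed
qed

lemma normal_le_linearized_residual:
  assumes "0 < \<kappa>"
    and bound: "\<forall>\<^sub>F z in nhds y. infdist z (feasible_set f l p) \<le> \<kappa> * residual f l p z"
    and proj: "y \<in> proj v (feasible_set f l p)"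
    and deriv: "\<And>i. i \<in> {1..p} \<Longrightarrow> (f i has_derivative (\<lambda>v. g i \<bullet> v)) (at y)"
  shows "sgn (v - y) \<bullet> d \<le> \<kappa> * linearized_residual f g l p y d"
proof (rule field_le_epsilon)
  fix e :: real assume "0 < e"
  let ?\<phi> = "linearized_residual f g l p y d"
  have y: "y \<in> feasible_set f l p"
    using proj by (simp add: proj_def)
  have "((\<lambda>t. y + t *\<^sub>R d) \<longlongrightarrow> y + 0 *\<^sub>R d) (at_right 0)"
    by (intro tendsto_intros)
  then have "\<forall>\<^sub>F t in at_right 0. infdist (y + t *\<^sub>R d) (feasible_set f l p) \<le> \<kappa> * residual f l p (y + t *\<^sub>R d)"
    using eventually_compose_filterlim[OF bound] by simp
  moreover have "\<forall>\<^sub>F t in at_right 0. residual f l p (y + t *\<^sub>R d) \<le> t * (?\<phi> + e / \<kappa>)"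
    using residual_first_order_bound[OF y deriv] \<open>0 < e\<close> \<open>0 < \<kappa>\<close> by simp
  ultimately obtain t where t: "0 < t"
    "infdist (y + t *\<^sub>R d) (feasible_set f l p) \<le> \<kappa> * residual f l p (y + t *\<^sub>R d)"
    "residual f l p (y + t *\<^sub>R d) \<le> t * (?\<phi> + e / \<kappa>)"
    using eventually_happens'[OF trivial_limit_at_right_real
        eventually_conj[OF eventually_at_right_less[of "0::real"] eventually_conj]] by blast
  have "t * (sgn (v - y) \<bullet> d) = sgn (v - y) \<bullet> ((y + t *\<^sub>R d) - y)"
    by simp
  also have "\<dots> \<le> infdist (y + t *\<^sub>R d) (feasible_set f l p)"
    using proj_normal_bound[OF convex_feasible_set closed_feasible_set proj] .
  also have "\<dots> \<le> \<kappa> * (t * (?\<phi> + e / \<kappa>))"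
    using t(2,3) \<open>0 < \<kappa>\<close> by (smt (verit) mult_left_mono)
  also have "\<dots> = t * (\<kappa> * ?\<phi> + e)"
    using \<open>0 < \<kappa>\<close> by (simp add: field_simps)
  finally show "sgn (v - y) \<bullet> d \<le> \<kappa> * ?\<phi> + e"
    using t(1) by simp
qed

lemma projection_multipliers_of_combination:
  assumes "0 < \<kappa>" and y: "y \<in> feasible_set f l p"
    and \<mu>: "\<And>\<gamma>. 0 \<le> \<mu> \<gamma>" "\<And>\<gamma>. \<gamma> \<notin> active_constraints f l p y \<Longrightarrow> \<mu> \<gamma> = 0"
      "sum \<mu> (active_constraints f l p y) \<le> 1"
      "sgn (v - y) = \<kappa> *\<^sub>R (\<Sum>\<gamma>\<in>active_constraints f l p y. \<mu> \<gamma> *\<^sub>R signed_gradient g \<gamma>)"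
  shows "(\<lambda>i. if i \<in> {1..p} then \<kappa> * (\<mu> (i, True) - \<mu> (i, False)) else 0)
    \<in> projection_multipliers f g l p \<kappa> v y" (is "?lam \<in> _")
proof -
  let ?A = "active_constraints f l p y"
  have sum_A: "(\<Sum>\<gamma>\<in>?A. F \<gamma>) = (\<Sum>i=1..p. F (i, True) + F (i, False))"
    if "\<And>\<gamma>. \<gamma> \<notin> ?A \<Longrightarrow> F \<gamma> = 0" for F :: "nat \<times> bool \<Rightarrow> 'b::comm_monoid_add"
  proof -
    have "(\<Sum>\<gamma>\<in>?A. F \<gamma>) = (\<Sum>\<gamma>\<in>{1..p} \<times> UNIV. F \<gamma>)"
      using that by (intro sum.mono_neutral_left[OF _ active_constraints_subset[OF l_le_p]]) auto
    then show ?thesis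
      by (simp add: sum_Times_UNIV_bool)
  qed
  have "(\<Sum>i=1..p. ?lam i *\<^sub>R g i) = \<kappa> *\<^sub>R (\<Sum>\<gamma>\<in>?A. \<mu> \<gamma> *\<^sub>R signed_gradient g \<gamma>)"
    using \<mu>(2) by (simp add: sum_A scaleR_sum_right signed_gradient_def algebra_simps)
  then have eq: "(1 / norm (y - v)) *\<^sub>R (y - v) + (\<Sum>i=1..p. ?lam i *\<^sub>R g i) = 0"
    using \<mu>(4) by (simp add: normalized_diff_eq_neg_sgn)
  have "(\<Sum>i=1..p. \<bar>?lam i\<bar>) \<le> (\<Sum>i=1..p. \<kappa> * (\<mu> (i, True) + \<mu> (i, False)))"
    using \<open>0 < \<kappa>\<close> \<mu>(1) by (intro sum_mono) (auto simp: abs_mult abs_le_iff)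
  also have "\<dots> = \<kappa> * sum \<mu> ?A"
    using \<mu>(2) by (simp add: sum_A sum_distrib_left)
  also have "\<dots> \<le> \<kappa>"
    using \<mu>(3) \<open>0 < \<kappa>\<close> by simp
  finally have bound: "(\<Sum>i=1..p. \<bar>?lam i\<bar>) \<le> \<kappa>" .
  have "0 \<le> ?lam i \<and> ?lam i * f i y = 0" if i: "i \<in> {1..l}" for i
  proof -
    have "(i, False) \<notin> ?A" "f i y \<noteq> 0 \<Longrightarrow> (i, True) \<notin> ?A"
      using i by (auto simp: active_constraints_def)
    then show ?thesis
      using i l_le_p \<mu>(1,2) \<open>0 < \<kappa>\<close> by auto
  qed
  with eq bound show ?thesis
    by (simp add: projection_multipliers_def)
qed

lemma projection_multipliers_nonempty:
  assumes "0 < \<kappa>"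
    and bound: "\<forall>\<^sub>F z in nhds y. infdist z (feasible_set f l p) \<le> \<kappa> * residual f l p z"
    and proj: "y \<in> proj v (feasible_set f l p)"
    and deriv: "\<And>i. i \<in> {1..p} \<Longrightarrow> (f i has_derivative (\<lambda>v. g i \<bullet> v)) (at y)"
  shows "projection_multipliers f g l p \<kappa> v y \<noteq> {}"
proof -
  let ?A = "active_constraints f l p y"
  have fin: "finite ?A"
    using finite_active_constraints[OF l_le_p] .
  have "(1 / \<kappa>) *\<^sub>R sgn (v - y) \<in> convex hull (insert 0 (signed_gradient g ` ?A))"
  proof (rule mem_convex_hull_if_support_le)
    fix d
    have "(1 / \<kappa>) *\<^sub>R sgn (v - y) \<bullet> d \<le> linearized_residual f g l p y d"
      using normal_le_linearized_residual[OF assms, of d] \<open>0 < \<kappa>\<close> by (simp add: field_simps)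
    then show "(1 / \<kappa>) *\<^sub>R sgn (v - y) \<bullet> d \<le> Max ((\<lambda>s. s \<bullet> d) ` insert 0 (signed_gradient g ` ?A))"
      by (simp add: linearized_residual_def image_image)
  qed (use fin in auto)
  then obtain \<mu> where \<mu>: "\<And>\<gamma>. 0 \<le> \<mu> \<gamma>" "\<And>\<gamma>. \<gamma> \<notin> ?A \<Longrightarrow> \<mu> \<gamma> = 0" "sum \<mu> ?A \<le> 1"
    "(1 / \<kappa>) *\<^sub>R sgn (v - y) = (\<Sum>\<gamma>\<in>?A. \<mu> \<gamma> *\<^sub>R signed_gradient g \<gamma>)"
    using convex_hull_insert_zero_subset[OF fin] by blast
  have "sgn (v - y) = \<kappa> *\<^sub>R (\<Sum>\<gamma>\<in>?A. \<mu> \<gamma> *\<^sub>R signed_gradient g \<gamma>)"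
    using \<mu>(4) \<open>0 < \<kappa>\<close> by (simp flip: \<mu>(4))
  then show ?thesis
    using projection_multipliers_of_combination[OF \<open>0 < \<kappa>\<close> _ \<mu>(1-3)] proj
    by (auto simp: proj_def)
qed

end

text \<open>Real-valued forms of R-regularity with respect to \<open>D\<close> and of condition (b).\<close>

definition local_error_bound ::
    "('x::metric_space \<Rightarrow> nat \<Rightarrow> 'a::metric_space \<Rightarrow> real) \<Rightarrow> nat \<Rightarrow> nat \<Rightarrow> 'x set \<Rightarrow> 'x \<Rightarrow> 'a \<Rightarrow> bool" where
  "local_error_bound H l p D xb yb \<longleftrightarrow> (\<exists>\<kappa>>0. \<exists>V. open V \<and> (xb, yb) \<in> V \<and>
     (\<forall>x y. (x, y) \<in> V \<and> x \<in> D \<longrightarrow> infdist y (feasible_set (H x) l p) \<le> \<kappa> * residual (H x) l p y))"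

definition bounded_multipliers ::
    "('x::topological_space \<Rightarrow> nat \<Rightarrow> 'a::real_inner \<Rightarrow> real) \<Rightarrow> ('x \<Rightarrow> 'a \<Rightarrow> nat \<Rightarrow> 'a) \<Rightarrow> nat \<Rightarrow> nat \<Rightarrow> 'x set \<Rightarrow> 'x \<Rightarrow> 'a \<Rightarrow> real \<Rightarrow> bool"
  where
  "bounded_multipliers H g l p D xb yb M \<longleftrightarrow> (\<forall>X N Y. (\<forall>k. X k \<in> D) \<and> X \<longlonglongrightarrow> xb \<and> N \<longlonglongrightarrow> yb \<and>
     (\<forall>k. N k \<notin> feasible_set (H (X k)) l p) \<and> (\<forall>k. Y k \<in> proj (N k) (feasible_set (H (X k)) l p)) \<longrightarrow>
     (\<forall>\<^sub>F k in sequentially. projection_multipliers (H (X k)) (g (X k) (Y k)) l p M (N k) (Y k) \<noteq> {}))"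

lemma sequence_violating_local_error_bound:
  assumes "\<not> local_error_bound H l p D xb yb"
  obtains X N where "X \<longlonglongrightarrow> xb" "N \<longlonglongrightarrow> yb" "\<And>k. X k \<in> D"
    "\<And>k. real (Suc k) * residual (H (X k)) l p (N k) < infdist (N k) (feasible_set (H (X k)) l p)"
proof -
  have "\<exists>z. dist z (xb, yb) < inverse (real (Suc k)) \<and> fst z \<in> D \<and>
      real (Suc k) * residual (H (fst z)) l p (snd z) < infdist (snd z) (feasible_set (H (fst z)) l p)"
    for k
  proof (rule ccontr)
    assume "\<not> ?thesis"
    then have "infdist y (feasible_set (H x) l p) \<le> real (Suc k) * residual (H x) l p y"
      if "(x, y) \<in> ball (xb, yb) (inverse (real (Suc k)))" "x \<in> D" for x y
      using that by (auto simp: dist_commute not_less) (meson leD)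
    then have "local_error_bound H l p D xb yb"
      unfolding local_error_bound_def
      by (intro exI[of _ "real (Suc k)"] conjI exI[of _ "ball (xb, yb) (inverse (real (Suc k)))"]) auto
    with assms show False ..
  qed
  then obtain Z where Z: "Z \<longlonglongrightarrow> (xb, yb)" "\<And>k. fst (Z k) \<in> D"
    "\<And>k. real (Suc k) * residual (H (fst (Z k))) l p (snd (Z k))
      < infdist (snd (Z k)) (feasible_set (H (fst (Z k))) l p)"
    using sequence_tendsto_choice[of "(xb, yb)" "\<lambda>k z. fst z \<in> D \<and>
        real (Suc k) * residual (H (fst z)) l p (snd z) < infdist (snd z) (feasible_set (H (fst z)) l p)"]
    by blast
  show ?thesis
    using tendsto_fst[OF Z(1)] tendsto_snd[OF Z(1)] Z(2,3)
    by (intro that[of "fst \<circ> Z" "snd \<circ> Z"]) (simp_all add: o_def)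
qed

locale parametric_convex_constraints =
  fixes H :: "'x::heine_borel \<Rightarrow> nat \<Rightarrow> 'a::euclidean_space \<Rightarrow> real"
    and grad :: "'x \<Rightarrow> 'a \<Rightarrow> nat \<Rightarrow> 'a"
    and l p :: nat and D :: "'x set" and xb :: 'x and yb :: 'a and U :: "('x \<times> 'a) set"
  assumes constraints: "x \<in> D \<Longrightarrow> convex_constraints (H x) l p"
    and feasible_nonempty: "x \<in> D \<Longrightarrow> feasible_set (H x) l p \<noteq> {}"
    and xb_in_D: "xb \<in> D"
    and yb_feasible: "yb \<in> feasible_set (H xb) l p"
    and bounded_feasible: "bounded (feasible_set (H xb) l p)"
    and open_U: "open U"
    and feasible_subset_U: "{xb} \<times> feasible_set (H xb) l p \<subseteq> U"
    and continuous_on_U: "i \<in> {1..p} \<Longrightarrow> continuous_on U (\<lambda>z. H (fst z) i (snd z))"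
    and derivative: "i \<in> {1..p} \<Longrightarrow> (x, y) \<in> U \<Longrightarrow> (H x i has_derivative (\<lambda>v. grad x y i \<bullet> v)) (at y)"
begin

abbreviation \<Gamma> :: "'x \<Rightarrow> 'a set" where
  "\<Gamma> x \<equiv> feasible_set (H x) l p"

lemma l_le_p: "l \<le> p"
  using constraints[OF xb_in_D] by (rule convex_constraints.l_le_p)

lemma tendsto_constraint:
  assumes "((\<lambda>k. (X k, Y k)) \<longlongrightarrow> (x0, y0)) F" "(x0, y0) \<in> U" "i \<in> {1..p}"
  shows "((\<lambda>k. H (X k) i (Y k)) \<longlongrightarrow> H x0 i y0) F"
  using continuous_on_tendsto_compose[OF continuous_on_U[OF assms(3)] assms(1,2)
      topological_tendstoD[OF assms(1) open_U assms(2)]]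
  by simp

lemma residual_tendsto_0_at_feasible:
  assumes "((\<lambda>k. (X k, Y k)) \<longlongrightarrow> (x0, y0)) F" "(x0, y0) \<in> U" "y0 \<in> \<Gamma> x0"
  shows "((\<lambda>k. residual (H (X k)) l p (Y k)) \<longlongrightarrow> 0) F"
  using residual_tendsto_0[where F="\<lambda>k. H (X k)" and f="H x0",
      OF l_le_p tendsto_constraint[OF assms(1,2)] assms(3)] .

lemma feasible_if_residual_tendsto_0_at:
  assumes "((\<lambda>k. (X k, Y k)) \<longlongrightarrow> (x0, y0)) F" "(x0, y0) \<in> U" "F \<noteq> bot"
    and "((\<lambda>k. residual (H (X k)) l p (Y k)) \<longlongrightarrow> 0) F"
  shows "y0 \<in> \<Gamma> x0"
  using feasible_if_residual_tendsto_0[where F="\<lambda>k. H (X k)" and f="H x0",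
      OF l_le_p tendsto_constraint[OF assms(1,2)] assms(3,4)] .

lemma segment_limit_feasible:
  assumes X: "X \<longlonglongrightarrow> xb" "\<And>k. X k \<in> D" and Y: "\<And>k. Y k \<in> \<Gamma> (X k)"
    and W: "\<And>k. W k \<in> closed_segment yb (Y k)" "W \<longlonglongrightarrow> w0" and "(xb, w0) \<in> U"
  shows "w0 \<in> \<Gamma> xb"
proof -
  have "(xb, yb) \<in> U"
    using feasible_subset_U yb_feasible by blast
  then have lim_yb: "(\<lambda>k. residual (H (X k)) l p yb) \<longlonglongrightarrow> 0"
    using residual_tendsto_0_at_feasible[OF tendsto_Pair[OF X(1) tendsto_const] _ yb_feasible] by simp
  have le_yb: "residual (H (X k)) l p (W k) \<le> residual (H (X k)) l p yb" for k
    using convex_constraints.residual_closed_segment_le[OF constraints[OF X(2)] Y W(1)] .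
  have "(\<lambda>k. residual (H (X k)) l p (W k)) \<longlonglongrightarrow> 0"
    by (rule tendsto_sandwich[OF _ _ tendsto_const lim_yb]) (simp_all add: le_yb residual_nonneg)
  then show ?thesis
    by (rule feasible_if_residual_tendsto_0_at[OF tendsto_Pair[OF X(1) W(2)] \<open>(xb, w0) \<in> U\<close>
          sequentially_bot])
qed

lemma compact_feasible_xb: "compact (\<Gamma> xb)"
  using bounded_feasible convex_constraints.closed_feasible_set[OF constraints[OF xb_in_D]]
  by (simp add: compact_eq_bounded_closed)

text \<open>A point of the segment from \<open>yb\<close> to a point of \<open>\<Gamma> x\<close> far from \<open>\<Gamma> xb\<close> can be
  chosen at distance \<open>e / 2\<close> from \<open>\<Gamma> xb\<close>; by convexity its residual is at most that of
  \<open>yb\<close>, so its limit points as \<open>x \<longrightarrow> xb\<close> lie in \<open>\<Gamma> xb\<close>, which is absurd.\<close>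
lemma feasible_sets_near_xb:
  assumes "0 < e" and U: "\<And>w. infdist w (\<Gamma> xb) < e \<Longrightarrow> (xb, w) \<in> U"
  shows "\<exists>\<eta>>0. \<forall>x\<in>D. dist x xb < \<eta> \<longrightarrow> (\<forall>y\<in>\<Gamma> x. infdist y (\<Gamma> xb) < e)"
proof (rule ccontr)
  let ?K = "\<Gamma> xb"
  assume "\<not> ?thesis"
  then have "\<exists>x. dist x xb < inverse (real (Suc k)) \<and> x \<in> D \<and> (\<exists>y\<in>\<Gamma> x. e \<le> infdist y ?K)" for k
    by (metis inverse_positive_iff_positive not_le of_nat_0_less_iff zero_less_Suc)
  then obtain X where X: "X \<longlonglongrightarrow> xb" "\<And>k. X k \<in> D" "\<And>k. \<exists>y\<in>\<Gamma> (X k). e \<le> infdist y ?K"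
    using sequence_tendsto_choice[of xb "\<lambda>_ x. x \<in> D \<and> (\<exists>y\<in>\<Gamma> x. e \<le> infdist y ?K)"] by blast
  then obtain Y where Y: "\<And>k. Y k \<in> \<Gamma> (X k)" "\<And>k. e \<le> infdist (Y k) ?K"
    by metis
  have "\<exists>w\<in>closed_segment yb (Y k). infdist w ?K = e / 2" for k
    using closed_segment_infdist_IVT[OF yb_feasible, of "e / 2"] Y(2)[of k] \<open>0 < e\<close> by simp
  then obtain W where W: "\<And>k. W k \<in> closed_segment yb (Y k)" "\<And>k. infdist (W k) ?K = e / 2"
    by metis
  have "seq_compact {w. infdist w ?K \<le> e / 2}"
    using compact_infdist_le[OF _ compact_feasible_xb, of "e / 2"] yb_feasible \<open>0 < e\<close>
    by (auto intro: compact_imp_seq_compact)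
  moreover have "\<forall>k. W k \<in> {w. infdist w ?K \<le> e / 2}"
    using W(2) by simp
  ultimately obtain w0 r where r: "w0 \<in> {w. infdist w ?K \<le> e / 2}" "strict_mono r" "(W \<circ> r) \<longlonglongrightarrow> w0"
    by (rule seq_compactE)
  have "(\<lambda>k. infdist ((W \<circ> r) k) ?K) \<longlonglongrightarrow> infdist w0 ?K"
    using r(3) by (intro tendsto_infdist)
  then have w0: "infdist w0 ?K = e / 2"
    using W(2) by (simp add: o_def LIMSEQ_const_iff)
  have "w0 \<in> ?K"
  proof (rule segment_limit_feasible)
    show "(X \<circ> r) \<longlonglongrightarrow> xb"
      using LIMSEQ_subseq_LIMSEQ[OF X(1) r(2)] .
    show "(xb, w0) \<in> U"
      using U w0 \<open>0 < e\<close> by simp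
  qed (use X(2) Y(1) W(1) r(3) in auto)
  with w0 \<open>0 < e\<close> show False
    by simp
qed

lemma graph_near_xb_subset_U: "\<exists>\<eta>>0. \<forall>x\<in>D. dist x xb < \<eta> \<longrightarrow> {x} \<times> \<Gamma> x \<subseteq> U"
proof -
  obtain e where e: "0 < e" "\<And>x y. dist x xb < e \<Longrightarrow> infdist y (\<Gamma> xb) < e \<Longrightarrow> (x, y) \<in> U"
    using compact_thickening_subset_open[OF compact_feasible_xb _ open_U feasible_subset_U] yb_feasible
    by blast
  then obtain \<eta> where "0 < \<eta>" "\<And>x y. x \<in> D \<Longrightarrow> dist x xb < \<eta> \<Longrightarrow> y \<in> \<Gamma> x \<Longrightarrow> infdist y (\<Gamma> xb) < e"
    using feasible_sets_near_xb[of e] by auto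
  with e show ?thesis
    by (intro exI[of _ "min \<eta> e"]) auto
qed

lemma projections_tendsto:
  assumes "open V" "(xb, yb) \<in> V"
    and bound: "\<And>x y. (x, y) \<in> V \<Longrightarrow> x \<in> D \<Longrightarrow> infdist y (\<Gamma> x) \<le> \<kappa> * residual (H x) l p y"
    and X: "\<And>k. X k \<in> D" "X \<longlonglongrightarrow> xb" and N: "N \<longlonglongrightarrow> yb"
    and Y: "\<And>k. Y k \<in> proj (N k) (\<Gamma> (X k))"
  shows "Y \<longlonglongrightarrow> yb"
proof -
  have XN: "(\<lambda>k. (X k, N k)) \<longlonglongrightarrow> (xb, yb)"
    using tendsto_Pair[OF X(2) N] .
  have "(xb, yb) \<in> U"
    using feasible_subset_U yb_feasible by blast
  then have lim: "(\<lambda>k. \<kappa> * residual (H (X k)) l p (N k)) \<longlonglongrightarrow> 0"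
    using tendsto_mult_right_zero[OF residual_tendsto_0_at_feasible[OF XN _ yb_feasible]] by simp
  have le: "\<forall>\<^sub>F k in sequentially. norm (Y k - N k) \<le> \<kappa> * residual (H (X k)) l p (N k)"
    using topological_tendstoD[OF XN assms(1,2)]
  proof eventually_elim
    case (elim k)
    show ?case
      using bound[OF elim X(1)] norm_eq_infdist_if_proj[OF Y] by simp
  qed
  have "(\<lambda>k. norm (Y k - N k)) \<longlonglongrightarrow> 0"
    by (rule tendsto_sandwich[OF _ le tendsto_const lim]) simp
  from tendsto_add[OF N tendsto_norm_zero_cancel[OF this]] show ?thesis
    by simp
qed

lemma local_error_bound_imp_bounded_multipliers:
  assumes "local_error_bound H l p D xb yb"
  shows "\<exists>M>0. bounded_multipliers H grad l p D xb yb M"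
proof -
  obtain \<kappa> V where "0 < \<kappa>" "open V" "(xb, yb) \<in> V"
    and bound: "\<And>x y. (x, y) \<in> V \<Longrightarrow> x \<in> D \<Longrightarrow> infdist y (\<Gamma> x) \<le> \<kappa> * residual (H x) l p y"
    using assms by (auto simp: local_error_bound_def)
  have "bounded_multipliers H grad l p D xb yb \<kappa>"
    unfolding bounded_multipliers_def
  proof (intro allI impI, elim conjE)
    fix X N Y
    assume X: "\<forall>k. X k \<in> D" "X \<longlonglongrightarrow> xb" and N: "N \<longlonglongrightarrow> yb"
      and Y: "\<forall>k. Y k \<in> proj (N k) (\<Gamma> (X k))"
    have "(xb, yb) \<in> U"
      using feasible_subset_U yb_feasible by blast
    moreover have "Y \<longlonglongrightarrow> yb"
      using projections_tendsto[OF \<open>open V\<close> \<open>(xb, yb) \<in> V\<close> bound] X N Y by blast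
    ultimately have "\<forall>\<^sub>F k in sequentially. (X k, Y k) \<in> U \<inter> V"
      using topological_tendstoD[OF tendsto_Pair[OF X(2)] open_Int[OF open_U \<open>open V\<close>]]
        \<open>(xb, yb) \<in> V\<close> by blast
    then show "\<forall>\<^sub>F k in sequentially.
        projection_multipliers (H (X k)) (grad (X k) (Y k)) l p \<kappa> (N k) (Y k) \<noteq> {}"
    proof eventually_elim
      case (elim k)
      have "((\<lambda>z. (X k, z)) \<longlongrightarrow> (X k, Y k)) (nhds (Y k))"
        by (intro tendsto_Pair tendsto_const filterlim_ident)
      then have "\<forall>\<^sub>F z in nhds (Y k). (X k, z) \<in> V"
        using topological_tendstoD \<open>open V\<close> elim by blast
      then have "\<forall>\<^sub>F z in nhds (Y k). infdist z (\<Gamma> (X k)) \<le> \<kappa> * residual (H (X k)) l p z"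
        by eventually_elim (use bound X(1) in blast)
      then show ?case
        using convex_constraints.projection_multipliers_nonempty[OF constraints \<open>0 < \<kappa>\<close>]
          X(1) Y derivative elim by blast
    qed
  qed
  with \<open>0 < \<kappa>\<close> show ?thesis
    by blast
qed

lemma bounded_multipliers_imp_local_error_bound:
  assumes "bounded_multipliers H grad l p D xb yb M"
  shows "local_error_bound H l p D xb yb"
proof (rule ccontr)
  assume "\<not> local_error_bound H l p D xb yb"
  then obtain X N where X: "X \<longlonglongrightarrow> xb" "\<And>k. X k \<in> D" and N: "N \<longlonglongrightarrow> yb"
    and far: "\<And>k. real (Suc k) * residual (H (X k)) l p (N k) < infdist (N k) (\<Gamma> (X k))"
    by (rule sequence_violating_local_error_bound) blast
  have N_out: "N k \<notin> \<Gamma> (X k)" for k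
  proof
    assume "N k \<in> \<Gamma> (X k)"
    moreover have "0 \<le> real (Suc k) * residual (H (X k)) l p (N k)"
      by (intro mult_nonneg_nonneg residual_nonneg) simp
    ultimately show False
      using far[of k] by simp
  qed
  have "\<exists>y. y \<in> proj (N k) (\<Gamma> (X k))" for k
    using proj_nonempty[OF convex_constraints.closed_feasible_set[OF constraints[OF X(2)]]
        feasible_nonempty[OF X(2)]] by blast
  then obtain Y where Y: "\<And>k. Y k \<in> proj (N k) (\<Gamma> (X k))"
    by metis
  obtain \<eta> where "0 < \<eta>" and graph: "\<And>x. x \<in> D \<Longrightarrow> dist x xb < \<eta> \<Longrightarrow> {x} \<times> \<Gamma> x \<subseteq> U"
    using graph_near_xb_subset_U by blast
  have "\<forall>\<^sub>F k in sequentially. projection_multipliers (H (X k)) (grad (X k) (Y k)) l p M (N k) (Y k) \<noteq> {}"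
    using assms X N N_out Y unfolding bounded_multipliers_def by blast
  moreover have "\<forall>\<^sub>F k in sequentially. dist (X k) xb < \<eta>"
    using tendstoD[OF X(1) \<open>0 < \<eta>\<close>] .
  moreover obtain n where "M \<le> real n"
    using real_arch_simple by blast
  then have "\<forall>\<^sub>F k in sequentially. M \<le> real (Suc k)"
    unfolding eventually_sequentially by (intro exI[of _ n]) auto
  ultimately obtain k lam where lam: "lam \<in> projection_multipliers (H (X k)) (grad (X k) (Y k)) l p M (N k) (Y k)"
    and k: "dist (X k) xb < \<eta>" "M \<le> real (Suc k)"
    using eventually_happens'[OF sequentially_bot eventually_conj[OF _ eventually_conj]] by blast
  have YU: "(X k, Y k) \<in> U"
    using graph[OF X(2) k(1)] Y[of k] by (auto simp: proj_def)
  have "infdist (N k) (\<Gamma> (X k)) = norm (Y k - N k)"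
    using norm_eq_infdist_if_proj[OF Y] by simp
  also have "\<dots> \<le> M * residual (H (X k)) l p (N k)"
    using convex_constraints.norm_le_multiplier_residual[OF constraints[OF X(2)] _ derivative lam]
      Y[of k] YU by (auto simp: proj_def)
  also have "\<dots> \<le> real (Suc k) * residual (H (X k)) l p (N k)"
    using k(2) residual_nonneg by (rule mult_right_mono)
  finally show False
    using far[of k] by simp
qed

theorem local_error_bound_iff_bounded_multipliers:
  "local_error_bound H l p D xb yb \<longleftrightarrow> (\<exists>M>0. bounded_multipliers H grad l p D xb yb M)"
  using local_error_bound_imp_bounded_multipliers bounded_multipliers_imp_local_error_bound by blast

end

definition real_constraints :: "(nat \<Rightarrow> 'x \<times> 'y \<Rightarrow> ereal) \<Rightarrow> 'x \<Rightarrow> nat \<Rightarrow> 'y \<Rightarrow> real" where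
  "real_constraints h x i y = real_of_ereal (h i (x, y))"

lemma
  assumes "l \<le> p" and finite_h: "\<And>i y. i \<in> {1..p} \<Longrightarrow> \<bar>h i (x, y)\<bar> \<noteq> \<infinity>"
  shows Gam_eq_feasible_set: "Gam h l p x = feasible_set (real_constraints h x) l p"
    and resid_eq_residual: "resid h l p x y = ereal (residual (real_constraints h x) l p y)"
    and LamM_eq_projection_multipliers:
      "LamM h l p M v x y = projection_multipliers (real_constraints h x) (\<lambda>i. ygrad (h i) x y) l p M v y"
proof -
  have h: "h i (x, y) = ereal (real_constraints h x i y)" if "i \<in> {1..l} \<union> {l+1..p}" for i y
    using finite_h[of i y] that \<open>l \<le> p\<close> by (auto simp: real_constraints_def ereal_real')
  then show "Gam h l p x = feasible_set (real_constraints h x) l p"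
    by (auto simp: Gam_def feasible_set_def zero_ereal_def)
  have "ereal (residual (real_constraints h x) l p y) =
      Max (ereal ` insert 0 ((\<lambda>i. real_constraints h x i y) ` {1..l} \<union> (\<lambda>i. \<bar>real_constraints h x i y\<bar>) ` {l+1..p}))"
    unfolding residual_def by (rule mono_Max_commute) (auto simp: mono_def)
  also have "\<dots> = resid h l p x y"
    unfolding resid_def using h by (auto simp: image_iff zero_ereal_def intro!: arg_cong[where f=Max])
  finally show "resid h l p x y = ereal (residual (real_constraints h x) l p y)" ..
  show "LamM h l p M v x y = projection_multipliers (real_constraints h x) (\<lambda>i. ygrad (h i) x y) l p M v y"
    using h by (auto simp: LamM_def Lam_def projection_multipliers_def zero_ereal_def)
qed

lemma R_regular_iff_local_error_bound:
  assumes "l \<le> p" and finite_h: "\<And>x i y. x \<in> \<Omega> \<Longrightarrow> i \<in> {1..p} \<Longrightarrow> \<bar>h i (x, y)\<bar> \<noteq> \<infinity>"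
    and "\<Omega> \<subseteq> domG (Gam h l p)"
  shows "R_regular h l p xb yb \<Omega> \<longleftrightarrow> local_error_bound (real_constraints h) l p \<Omega> xb yb"
proof -
  have "edist_set y (Gam h l p x) \<le> ereal \<kappa> * resid h l p x y \<longleftrightarrow>
      infdist y (feasible_set (real_constraints h x) l p) \<le> \<kappa> * residual (real_constraints h x) l p y"
    if "x \<in> \<Omega>" for x y \<kappa>
    using that assms(3) Gam_eq_feasible_set[where h=h and x=x, OF assms(1) finite_h[OF that]]
      resid_eq_residual[where h=h and x=x, OF assms(1) finite_h[OF that]]
    by (auto simp: edist_set_def domG_def)
  then show ?thesis
    unfolding R_regular_def local_error_bound_def by (simp cong: conj_cong imp_cong)
qed

lemma bounded_multipliers_iff_LamM:
  assumes "l \<le> p" and finite_h: "\<And>x i y. x \<in> \<Omega> \<Longrightarrow> i \<in> {1..p} \<Longrightarrow> \<bar>h i (x, y)\<bar> \<noteq> \<infinity>"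
  shows "bounded_multipliers (real_constraints h) (\<lambda>x y i. ygrad (h i) x y) l p \<Omega> xb yb M \<longleftrightarrow>
    (\<forall>xs vs ys. (\<forall>k. xs k \<in> \<Omega>) \<and> xs \<longlonglongrightarrow> xb \<and> vs \<longlonglongrightarrow> yb \<and>
       (\<forall>k. vs k \<notin> Gam h l p (xs k)) \<and> (\<forall>k. ys k \<in> proj (vs k) (Gam h l p (xs k)))
       \<longrightarrow> (\<forall>\<^sub>F k in sequentially. LamM h l p M (vs k) (xs k) (ys k) \<noteq> {}))"
proof -
  have "Gam h l p x = feasible_set (real_constraints h x) l p"
    and "LamM h l p M v x y = projection_multipliers (real_constraints h x) (\<lambda>i. ygrad (h i) x y) l p M v y"
    if "x \<in> \<Omega>" for x v y
    using Gam_eq_feasible_set[where h=h and x=x, OF assms(1) finite_h[OF that]]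
      LamM_eq_projection_multipliers[where h=h and x=x, OF assms(1) finite_h[OF that]] by simp_all
  then show ?thesis
    unfolding bounded_multipliers_def by (simp cong: conj_cong imp_cong)
qed

lemma convex_constraints_real_constraints:
  assumes "l \<le> p" and finite_h: "\<And>i y. i \<in> {1..p} \<Longrightarrow> \<bar>h i (x, y)\<bar> \<noteq> \<infinity>"
    and convex: "\<And>i. i \<in> {1..l} \<Longrightarrow> ereal_convex (\<lambda>y. h i (x, y))"
    and affine: "\<And>i. i \<in> {l+1..p} \<Longrightarrow> ereal_affine (\<lambda>y. h i (x, y))"
  shows "convex_constraints (real_constraints h x) l p"
proof
  fix i assume i: "i \<in> {1..l}"
  have "real_constraints h x i = (\<lambda>y. real_of_ereal (h i (x, y)))"
    by (simp add: fun_eq_iff real_constraints_def)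
  with i \<open>l \<le> p\<close> show "convex_on UNIV (real_constraints h x i)"
    using convex_on_real_of_ereal[OF convex[OF i] finite_h] by simp
next
  fix i assume "i \<in> {l+1..p}"
  then obtain a b where "\<And>y. h i (x, y) = ereal (a \<bullet> y + b)"
    using affine unfolding ereal_affine_def by blast
  then show "\<exists>a b. \<forall>y. real_constraints h x i y = a \<bullet> y + b"
    by (auto simp: real_constraints_def)
qed (rule \<open>l \<le> p\<close>)

lemma parametric_convex_constraints_real_constraints:
  fixes h :: "nat \<Rightarrow> (real^'n) \<times> (real^'m) \<Rightarrow> ereal"
  assumes "l \<le> p" and xb: "xb \<in> domG (Gam h l p)" and yb: "yb \<in> Gam h l p xb"
    and U: "open U" "{xb} \<times> Gam h l p xb \<subseteq> U"
    and finite_U: "\<And>i z. i \<in> {1..p} \<Longrightarrow> z \<in> U \<Longrightarrow> \<bar>h i z\<bar> \<noteq> \<infinity>"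
    and continuous_U: "\<And>i. i \<in> {1..p} \<Longrightarrow> continuous_on U (h i)"
    and derivative_U: "\<And>i x y. i \<in> {1..p} \<Longrightarrow> (x, y) \<in> U \<Longrightarrow>
      ((\<lambda>y'. real_of_ereal (h i (x, y'))) has_derivative (\<lambda>v. ygrad (h i) x y \<bullet> v)) (at y)"
    and finite_h: "\<And>x i y. x \<in> domG (Gam h l p) \<Longrightarrow> i \<in> {1..p} \<Longrightarrow> \<bar>h i (x, y)\<bar> \<noteq> \<infinity>"
    and A1: "\<forall>x. (\<forall>i\<in>{1..l}. ereal_convex (\<lambda>y. h i (x, y))) \<and> (\<forall>i\<in>{l+1..p}. ereal_affine (\<lambda>y. h i (x, y)))"
    and A2: "locally_bounded_at (Gam h l p) xb"
  shows "parametric_convex_constraints (real_constraints h) (\<lambda>x y i. ygrad (h i) x y) l p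
    (domG (Gam h l p)) xb yb U"
proof (rule parametric_convex_constraints.intro)
  fix x assume x: "x \<in> domG (Gam h l p)"
  show "convex_constraints (real_constraints h x) l p"
    using convex_constraints_real_constraints[where h=h and x=x, OF \<open>l \<le> p\<close> finite_h[OF x]] A1 by blast
  show "feasible_set (real_constraints h x) l p \<noteq> {}"
    using x Gam_eq_feasible_set[where h=h and x=x, OF \<open>l \<le> p\<close> finite_h[OF x]] by (simp add: domG_def)
next
  have Gam_xb: "Gam h l p xb = feasible_set (real_constraints h xb) l p"
    using Gam_eq_feasible_set[where h=h and x=xb, OF \<open>l \<le> p\<close> finite_h[OF xb]] .
  then show "yb \<in> feasible_set (real_constraints h xb) l p"
    "{xb} \<times> feasible_set (real_constraints h xb) l p \<subseteq> U"
    using yb U(2) by simp_all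
  obtain B V where "bounded B" "xb \<in> V" "\<forall>x\<in>V. Gam h l p x \<subseteq> B"
    using A2 unfolding locally_bounded_at_def by blast
  with Gam_xb show "bounded (feasible_set (real_constraints h xb) l p)"
    by (metis bounded_subset)
next
  fix i assume i: "i \<in> {1..p}"
  have "continuous_on U (real_of_ereal \<circ> h i)"
    using continuous_on_iff_real[of U "h i"] finite_U[OF i] continuous_U[OF i] by blast
  moreover have "(\<lambda>z. real_constraints h (fst z) i (snd z)) = real_of_ereal \<circ> h i"
    by (simp add: fun_eq_iff real_constraints_def)
  ultimately show "continuous_on U (\<lambda>z. real_constraints h (fst z) i (snd z))"
    by (simp only:)
  fix x y assume "(x, y) \<in> U"
  moreover have "real_constraints h x i = (\<lambda>y'. real_of_ereal (h i (x, y')))"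
    by (simp add: fun_eq_iff real_constraints_def)
  ultimately show "(real_constraints h x i has_derivative (\<lambda>v. ygrad (h i) x y \<bullet> v)) (at y)"
    using derivative_U[OF i] by (simp only:)
qed (use xb U(1) in simp_all)

lemma ex_parametric_convex_constraints_real_constraints:
  fixes h :: "nat \<Rightarrow> (real^'n) \<times> (real^'m) \<Rightarrow> ereal"
  assumes "l \<le> p" "xb \<in> domG (Gam h l p)" "yb \<in> Gam h l p xb"
    and smooth: "\<exists>U. open U \<and> {xb} \<times> Gam h l p xb \<subseteq> U \<and>
        (\<forall>i\<in>{1..p}. (\<forall>z\<in>U. h i z \<noteq> \<infinity> \<and> h i z \<noteq> -\<infinity>) \<and>
           continuous_on U (h i) \<and>
           (\<forall>x y. (x, y) \<in> U \<longrightarrow>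
              ((\<lambda>y'. real_of_ereal (h i (x, y'))) has_derivative (\<lambda>v. ygrad (h i) x y \<bullet> v)) (at y)) \<and>
           continuous_on U (\<lambda>(x, y). ygrad (h i) x y))"
    and "\<And>x i y. x \<in> domG (Gam h l p) \<Longrightarrow> i \<in> {1..p} \<Longrightarrow> \<bar>h i (x, y)\<bar> \<noteq> \<infinity>"
    and "\<forall>x. (\<forall>i\<in>{1..l}. ereal_convex (\<lambda>y. h i (x, y))) \<and> (\<forall>i\<in>{l+1..p}. ereal_affine (\<lambda>y. h i (x, y)))"
    and "locally_bounded_at (Gam h l p) xb"
  shows "\<exists>U. parametric_convex_constraints (real_constraints h) (\<lambda>x y i. ygrad (h i) x y) l p
    (domG (Gam h l p)) xb yb U"
proof -
  from smooth obtain U where U: "open U" "{xb} \<times> Gam h l p xb \<subseteq> U"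
    and U_props: "\<forall>i\<in>{1..p}. (\<forall>z\<in>U. h i z \<noteq> \<infinity> \<and> h i z \<noteq> -\<infinity>) \<and>
           continuous_on U (h i) \<and>
           (\<forall>x y. (x, y) \<in> U \<longrightarrow>
              ((\<lambda>y'. real_of_ereal (h i (x, y'))) has_derivative (\<lambda>v. ygrad (h i) x y \<bullet> v)) (at y)) \<and>
           continuous_on U (\<lambda>(x, y). ygrad (h i) x y)"
    by blast
  have "parametric_convex_constraints (real_constraints h) (\<lambda>x y i. ygrad (h i) x y) l p
    (domG (Gam h l p)) xb yb U"
  proof (rule parametric_convex_constraints_real_constraints[OF assms(1-3) U _ _ _ assms(5-7)])
    show "\<bar>h i z\<bar> \<noteq> \<infinity>" if "i \<in> {1..p}" "z \<in> U" for i z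
      using U_props that ereal_infinity_cases by blast
  qed (use U_props in blast)+
  then show ?thesis ..
qed

theorem theorem3p2:
  fixes h :: "nat \<Rightarrow> (real^'n) \<times> (real^'m) \<Rightarrow> ereal"
    and l p :: nat and xb :: "real^'n" and yb :: "real^'m"
  assumes lp: "l \<le> p"
    and xb_dom: "xb \<in> domG (Gam h l p)"
    and yb_in: "yb \<in> Gam h l p xb"
    and smooth: "\<exists>U. open U \<and> {xb} \<times> Gam h l p xb \<subseteq> U \<and>
        (\<forall>i\<in>{1..p}. (\<forall>z\<in>U. h i z \<noteq> \<infinity> \<and> h i z \<noteq> -\<infinity>) \<and>
           continuous_on U (h i) \<and>
           (\<forall>x y. (x, y) \<in> U \<longrightarrow>
              ((\<lambda>y'. real_of_ereal (h i (x, y'))) has_derivative (\<lambda>v. ygrad (h i) x y \<bullet> v)) (at y)) \<and>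
           continuous_on U (\<lambda>(x, y). ygrad (h i) x y))"
    and cont_y: "\<forall>x\<in>domG (Gam h l p). \<forall>i\<in>{1..p}.
        (\<forall>y. h i (x, y) \<noteq> \<infinity> \<and> h i (x, y) \<noteq> -\<infinity>) \<and>
        continuous_on UNIV (\<lambda>y. real_of_ereal (h i (x, y)))"
    and A1: "\<forall>x. (\<forall>i\<in>{1..l}. ereal_convex (\<lambda>y. h i (x, y))) \<and>
                 (\<forall>i\<in>{l+1..p}. ereal_affine (\<lambda>y. h i (x, y)))"
    and A2: "locally_bounded_at (Gam h l p) xb"
  shows "R_regular h l p xb yb (domG (Gam h l p)) \<longleftrightarrow>
    (\<exists>M>0. \<forall>xs vs ys.
       (\<forall>k. xs k \<in> domG (Gam h l p)) \<and> xs \<longlonglongrightarrow> xb \<and> vs \<longlonglongrightarrow> yb \<and>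
       (\<forall>k. vs k \<notin> Gam h l p (xs k)) \<and>
       (\<forall>k. ys k \<in> proj (vs k) (Gam h l p (xs k)))
       \<longrightarrow> (\<forall>\<^sub>F k in sequentially. LamM h l p M (vs k) (xs k) (ys k) \<noteq> {}))"
proof -
  have finite_h: "\<And>x i y. x \<in> domG (Gam h l p) \<Longrightarrow> i \<in> {1..p} \<Longrightarrow> \<bar>h i (x, y)\<bar> \<noteq> \<infinity>"
    by (intro ereal_infinity_cases) (use cont_y in blast)+
  obtain U where "parametric_convex_constraints (real_constraints h) (\<lambda>x y i. ygrad (h i) x y)
      l p (domG (Gam h l p)) xb yb U"
    using ex_parametric_convex_constraints_real_constraints[OF lp xb_dom yb_in smooth finite_h A1 A2] ..
  then interpret parametric_convex_constraints "real_constraints h" "\<lambda>x y i. ygrad (h i) x y"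
      l p "domG (Gam h l p)" xb yb U .
  show ?thesis
    by (simp only: R_regular_iff_local_error_bound[where h=h, OF lp finite_h order_refl]
        local_error_bound_iff_bounded_multipliers bounded_multipliers_iff_LamM[where h=h, OF lp finite_h])
qed

end
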